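(* Let $n\ge2$. For all $x,y\in\mathbb{H}^n$, $$\tfrac14\rho_{\mathbb{H}^n}(x,y)\le\tilde\tau_{\mathbb{H}^n}(x,y)\le\rho_{\mathbb{H}^n}(x,y)\quad\text{and}\quad \tilde\tau_{\mathbb{H}^n}(x,y)\le\tfrac12\rho_{\mathbb{H}^n}(x,y)+\log\tfrac54,$$ and all these inequalities are sharp: $$\inf_{x\ne y}\frac{\tilde\tau_{\mathbb{H}^n}(x,y)}{\rho_{\mathbb{H}^n}(x,y)}=\tfrac14,\qquad \sup_{x\ne y}\frac{\tilde\tau_{\mathbb{H}^n}(x,y)}{\rho_{\mathbb{H}^n}(x,y)}=1,$$ and equality $\tilde\tau_{\mathbb{H}^n}(x,y)=\tfrac12\rho_{\mathbb{H}^n}(x,y)+\log\tfrac54$ holds for $x=2e_n$, $y=\tfrac12e_n$.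
   Context: $\mathbb{H}^n=\{(x_1,\dots,x_n)\in\mathbb{R}^n:x_n>0\}$ with boundary $\{x_n=0\}$ in $\mathbb{R}^n$; $e_n$ is the $n$-th standard basis vector. The hyperbolic metric $\rho_{\mathbb{H}^n}$ is given by $\cosh\rho_{\mathbb{H}^n}(x,y)=1+\frac{|x-y|^2}{2x_ny_n}$. For a proper subdomain $D\subsetneq\mathbb{R}^n$ and $x,y\in D$, $\tilde\tau_D(x,y)=\log\big(1+\sup_{p\in\partial D}\frac{|x-y|}{\sqrt{|x-p||y-p|}}\big)$ (the scale invariant Cassinian metric). *)

theory Defs
  imports "HOL-Analysis.Analysis"
begin

text \<open>Upper half-space of real^'n with respect to a distinguished coordinate k
 (playing the role of the n-th coordinate x_n).\<close>
definition upper_half :: "'n::finite \<Rightarrow> (real^'n) set" where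
  "upper_half k = {x. x $ k > 0}"

definition hyp_dist :: "'n::finite \<Rightarrow> real^'n \<Rightarrow> real^'n \<Rightarrow> real" where
  "hyp_dist k x y = arcosh (1 + (norm (x - y))^2 / (2 * (x $ k) * (y $ k)))"

definition cassinian_si :: "(real^'n) set \<Rightarrow> real^'n \<Rightarrow> real^'n \<Rightarrow> real" where
  "cassinian_si D x y =
     ln (1 + (SUP p\<in>frontier D. dist x y / sqrt (dist x p * dist y p)))"

end

theory Submission
  imports Defs "HOL-Real_Asymp.Real_Asymp"
begin

text \<open>
  Put \<open>u = \<bar>x - y\<bar> / \<surd>(x\<^sub>n y\<^sub>n)\<close>, so that \<open>\<rho>(x, y) = 2 arsinh (u / 2)\<close>. Every boundary point \<open>p\<close>
  satisfies \<open>\<bar>x - p\<bar> \<ge> x\<^sub>n\<close>, so the supremum \<open>s\<close> in the Cassinian metric is at most \<open>u\<close>; evaluating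
  at the foot of the lower of the two points gives \<open>1 + u \<le> (1 + s)\<^sup>2\<close>. Hence
  \<open>\<tau>(x, y) = log (1 + s)\<close> lies between \<open>log (1 + u) / 2\<close> and \<open>log (1 + u)\<close>, and the three
  inequalities reduce to \<open>\<rho>/2 \<le> log (1 + u) \<le> \<rho>\<close> and \<open>log (1 + u) \<le> \<rho>/2 + log (5/4)\<close>.
  For two points on the vertical line through the origin the supremum is attained at the origin,
  so \<open>\<tau> = log (1 + u)\<close>: this gives the equality case and the ratio \<open>1\<close> as the points merge. For two
  points at height 1 and distance \<open>s\<close> every boundary point is at distance \<open>\<ge> s/2\<close> from one of
  them, so \<open>\<tau> \<le> log (1 + \<surd>(2s))\<close> while \<open>\<rho> \<sim> 2 log s\<close>, giving the ratio \<open>1/4\<close> as \<open>s \<rightarrow> \<infinity>\<close>.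
\<close>

section \<open>Inequalities for the inverse hyperbolic sine\<close>

lemma arcosh_one_plus_two_square:
  fixes s :: real
  assumes "0 \<le> s"
  shows "arcosh (1 + 2 * s\<^sup>2) = 2 * arsinh s"
proof -
  have "cosh (2 * arsinh s) = 1 + 2 * s\<^sup>2"
    by (simp add: cosh_double_cosh cosh_arsinh_real)
  moreover have "0 \<le> arsinh s"
    using assms arsinh_real_neg_iff[of s] by linarith
  ultimately show ?thesis
    using arcosh_cosh_real[of "2 * arsinh s"] by simp
qed

lemma arsinh_half_le_ln_one_plus:
  fixes u :: real
  assumes "0 \<le> u"
  shows "arsinh (u / 2) \<le> ln (1 + u)"
proof -
  have "sqrt ((u / 2)\<^sup>2 + 1) \<le> u / 2 + 1"
    using assms by (intro real_le_lsqrt) (simp_all add: power2_eq_square algebra_simps)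
  then show ?thesis
    unfolding arsinh_real_def using arsinh_real_aux[of "u / 2"] by (intro ln_mono) auto
qed

lemma ln_one_plus_le_two_arsinh_half:
  fixes u :: real
  assumes "0 \<le> u"
  shows "ln (1 + u) \<le> 2 * arsinh (u / 2)"
proof -
  define W where "W = u / 2 + sqrt ((u / 2)\<^sup>2 + 1)"
  have "1 + u \<le> (1 + u / 2)\<^sup>2"
    using zero_le_power2[of "u / 2"] by (simp add: power2_eq_square algebra_simps)
  also have "\<dots> \<le> W\<^sup>2"
    using assms by (intro power_mono) (simp_all add: W_def)
  finally have "ln (1 + u) \<le> ln (W\<^sup>2)"
    using assms by (intro ln_mono) auto
  also have "\<dots> = 2 * arsinh (u / 2)"
    using arsinh_real_aux[of "u / 2"] unfolding W_def arsinh_real_def by (subst ln_realpow) auto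
  finally show ?thesis .
qed

lemma ln_one_plus_le_arsinh_half_add:
  fixes u :: real
  assumes "0 \<le> u"
  shows "ln (1 + u) \<le> arsinh (u / 2) + ln (5 / 4)"
proof -
  have "(1 + 3 / 8 * u)\<^sup>2 \<le> (5 / 4)\<^sup>2 * ((u / 2)\<^sup>2 + 1)"
    using zero_le_power2[of "u / 2 - 3 / 4"] by (simp add: power2_eq_square algebra_simps)
  then have "1 + 3 / 8 * u \<le> sqrt ((5 / 4)\<^sup>2 * ((u / 2)\<^sup>2 + 1))"
    by (rule real_le_rsqrt)
  then have "1 + u \<le> 5 / 4 * (u / 2 + sqrt ((u / 2)\<^sup>2 + 1))"
    by (simp add: real_sqrt_mult)
  then have "ln (1 + u) \<le> ln (5 / 4 * (u / 2 + sqrt ((u / 2)\<^sup>2 + 1)))"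
    using assms by (intro ln_mono) auto
  also have "\<dots> = ln (5 / 4) + arsinh (u / 2)"
    unfolding arsinh_real_def using arsinh_real_aux[of "u / 2"] by (subst ln_mult) auto
  finally show ?thesis by linarith
qed

lemma arsinh_three_quarters: "arsinh (3 / 4 :: real) = ln 2"
proof -
  have "sqrt ((3 / 4)\<^sup>2 + 1) = (5 / 4 :: real)"
    by (rule real_sqrt_unique) (simp_all add: power2_eq_square)
  then show ?thesis by (simp add: arsinh_real_def)
qed

section \<open>Geometry of the upper half-space\<close>

lemma frontier_upper_half: "frontier (upper_half k) = {x :: real^'n. x $ k = 0}"
proof -
  have "upper_half k = {x :: real^'n. axis k 1 \<bullet> x > 0}"
    and "{x :: real^'n. axis k 1 \<bullet> x = 0} = {x. x $ k = 0}"
    by (simp_all add: upper_half_def inner_axis')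
  then show ?thesis
    using frontier_halfspace_gt[of "axis k (1::real)" 0] by simp
qed

lemma zero_in_frontier_upper_half: "0 \<in> frontier (upper_half k)"
  by (simp add: frontier_upper_half)

lemma abs_component_le_dist_frontier_upper_half:
  assumes "p \<in> frontier (upper_half k)"
  shows "\<bar>x $ k\<bar> \<le> dist x p"
  using component_le_norm_cart[of "x - p" k] assms by (simp add: frontier_upper_half dist_norm)

lemma norm_axis_real: "norm (axis k a) = \<bar>a :: real\<bar>"
proof -
  have "axis k a = a *\<^sub>R axis k (1::real)"
    by (simp add: axis_def vec_eq_iff)
  then show ?thesis by simp
qed

lemma dist_axis_axis: "dist (axis k a) (axis k b) = \<bar>a - b :: real\<bar>"
proof -
  have "axis k a - axis k b = axis k (a - b)"
    by (simp add: axis_def vec_eq_iff)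
  then show ?thesis by (simp add: dist_norm norm_axis_real)
qed

definition hyp_quotient :: "'n::finite \<Rightarrow> real^'n \<Rightarrow> real^'n \<Rightarrow> real" where
  "hyp_quotient k x y = dist x y / sqrt (x $ k * y $ k)"

lemma hyp_quotient_commute: "hyp_quotient k x y = hyp_quotient k y x"
  by (simp add: hyp_quotient_def dist_commute mult.commute)

lemma hyp_quotient_nonneg:
  "x \<in> upper_half k \<Longrightarrow> y \<in> upper_half k \<Longrightarrow> 0 \<le> hyp_quotient k x y"
  by (simp add: hyp_quotient_def upper_half_def)

lemma hyp_dist_eq_arsinh:
  assumes "x \<in> upper_half k" "y \<in> upper_half k"
  shows "hyp_dist k x y = 2 * arsinh (hyp_quotient k x y / 2)"
proof -
  have "(norm (x - y))\<^sup>2 / (2 * x $ k * y $ k) = 2 * (hyp_quotient k x y / 2)\<^sup>2"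
    using assms by (simp add: upper_half_def hyp_quotient_def dist_norm power_divide)
  then show ?thesis
    using arcosh_one_plus_two_square[of "hyp_quotient k x y / 2"] hyp_quotient_nonneg[OF assms]
    by (simp add: hyp_dist_def)
qed

lemma hyp_dist_pos:
  assumes "x \<in> upper_half k" "y \<in> upper_half k" "x \<noteq> y"
  shows "0 < hyp_dist k x y"
  using assms by (simp add: hyp_dist_eq_arsinh hyp_quotient_def upper_half_def)


section \<open>The Cassinian metric of the upper half-space\<close>

definition cassinian_sup :: "(real^'n) set \<Rightarrow> real^'n \<Rightarrow> real^'n \<Rightarrow> real" where
  "cassinian_sup D x y = (SUP p\<in>frontier D. dist x y / sqrt (dist x p * dist y p))"

lemma cassinian_si_eq_ln_cassinian_sup: "cassinian_si D x y = ln (1 + cassinian_sup D x y)"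
  by (simp add: cassinian_si_def cassinian_sup_def)

lemma cassinian_sup_commute: "cassinian_sup D x y = cassinian_sup D y x"
  by (simp add: cassinian_sup_def dist_commute mult.commute)

lemma cassinian_quotient_le_hyp_quotient:
  assumes x: "x \<in> upper_half k" and y: "y \<in> upper_half k" and p: "p \<in> frontier (upper_half k)"
  shows "dist x y / sqrt (dist x p * dist y p) \<le> hyp_quotient k x y"
proof -
  have pos: "0 < x $ k * y $ k"
    using x y by (simp add: upper_half_def)
  have "x $ k * y $ k \<le> dist x p * dist y p"
    using abs_component_le_dist_frontier_upper_half[OF p, of x]
      abs_component_le_dist_frontier_upper_half[OF p, of y] x y
    by (intro mult_mono) (auto simp: upper_half_def)
  with pos show ?thesis
    unfolding hyp_quotient_def by (intro divide_left_mono) auto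
qed

lemma cassinian_sup_upper_half_le_hyp_quotient:
  assumes "x \<in> upper_half k" "y \<in> upper_half k"
  shows "cassinian_sup (upper_half k) x y \<le> hyp_quotient k x y"
  unfolding cassinian_sup_def
  using cassinian_quotient_le_hyp_quotient[OF assms] zero_in_frontier_upper_half
  by (intro cSUP_least) auto

lemma cassinian_quotient_le_cassinian_sup_upper_half:
  assumes "x \<in> upper_half k" "y \<in> upper_half k" "p \<in> frontier (upper_half k)"
  shows "dist x y / sqrt (dist x p * dist y p) \<le> cassinian_sup (upper_half k) x y"
  unfolding cassinian_sup_def
proof (rule cSUP_upper2[OF _ assms(3) order_refl])
  show "bdd_above ((\<lambda>p. dist x y / sqrt (dist x p * dist y p)) ` frontier (upper_half k))"
    using cassinian_quotient_le_hyp_quotient[OF assms(1,2)] by (intro bdd_aboveI2) blast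
qed

lemma cassinian_sup_upper_half_nonneg:
  assumes "x \<in> upper_half k" "y \<in> upper_half k"
  shows "0 \<le> cassinian_sup (upper_half k) x y"
  using cassinian_quotient_le_cassinian_sup_upper_half[OF assms zero_in_frontier_upper_half]
  by (rule order_trans[rotated]) simp

lemma cassinian_sup_upper_half_axis:
  assumes "0 < a" "0 < b"
  shows "cassinian_sup (upper_half k) (axis k a) (axis k b) = hyp_quotient k (axis k a) (axis k b)"
proof (rule antisym)
  have mem: "axis k a \<in> upper_half k" "axis k b \<in> upper_half k"
    using assms by (simp_all add: upper_half_def)
  show "cassinian_sup (upper_half k) (axis k a) (axis k b) \<le> hyp_quotient k (axis k a) (axis k b)"
    by (rule cassinian_sup_upper_half_le_hyp_quotient[OF mem])
  show "hyp_quotient k (axis k a) (axis k b) \<le> cassinian_sup (upper_half k) (axis k a) (axis k b)"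
    using cassinian_quotient_le_cassinian_sup_upper_half[OF mem zero_in_frontier_upper_half] assms
    by (simp add: hyp_quotient_def norm_axis_real)
qed

text \<open>Applied with \<open>a = x\<^sub>n = \<bar>x - p\<bar>\<close>, \<open>b = y\<^sub>n\<close>, \<open>c = \<bar>y - p\<bar>\<close>, \<open>d = \<bar>x - y\<bar>\<close>, where \<open>p\<close> is
  the foot of the lower point \<open>x\<close> on the boundary.\<close>

lemma one_plus_div_sqrt_le_square:
  fixes a b c d :: real
  assumes a: "0 < a" and ab: "a \<le> b" and bc: "b \<le> c" and cd: "c \<le> d + a" and d: "0 \<le> d"
  shows "1 + d / sqrt (a * b) \<le> (1 + d / sqrt (a * c))\<^sup>2"
proof -
  define A B C where "A = sqrt a" and "B = sqrt b" and "C = sqrt c"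
  define q where "q = d / (A * C)"
  have A: "0 < A" and AB: "A \<le> B" and BC: "B \<le> C"
    using a ab bc by (simp_all add: A_def B_def C_def)
  have C: "0 < C" and q: "0 \<le> q"
    using A AB BC d by (simp_all add: q_def)
  have a_eq: "a = A\<^sup>2" and c_eq: "c = C\<^sup>2"
    using a ab bc by (simp_all add: A_def C_def)
  have "C / B \<le> C / A"
    using A AB C by (intro divide_left_mono) auto
  also have "\<dots> = c / (A * C)"
    using A C by (simp add: c_eq power2_eq_square)
  also have "\<dots> \<le> (d + a) / (A * C)"
    using cd A C by (intro divide_right_mono) auto
  also have "\<dots> = q + A / C"
    using A C by (simp add: q_def a_eq add_divide_distrib power2_eq_square)
  also have "\<dots> \<le> q + 1"
    using A BC AB C by simp
  finally have "C / B \<le> 1 + q"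
    by simp
  moreover have "d / sqrt (a * b) = q * (C / B)"
    using A AB C by (simp add: q_def A_def B_def real_sqrt_mult)
  ultimately have "d / sqrt (a * b) \<le> q * (1 + q)"
    using q by (metis mult_left_mono)
  moreover have "d / sqrt (a * c) = q"
    by (simp add: q_def A_def C_def real_sqrt_mult)
  ultimately show ?thesis
    using q by (simp add: power2_eq_square algebra_simps)
qed

lemma one_plus_hyp_quotient_le_square_cassinian_sup:
  assumes "x \<in> upper_half k" "y \<in> upper_half k"
  shows "1 + hyp_quotient k x y \<le> (1 + cassinian_sup (upper_half k) x y)\<^sup>2"
proof -
  have foot: "1 + hyp_quotient k x y \<le> (1 + cassinian_sup (upper_half k) x y)\<^sup>2"
    if x: "x \<in> upper_half k" and y: "y \<in> upper_half k" and le: "x $ k \<le> y $ k" for x y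
  proof -
    define p where "p = x - (x $ k) *\<^sub>R axis k 1"
    have p: "p \<in> frontier (upper_half k)"
      by (simp add: frontier_upper_half p_def)
    have xp: "dist x p = x $ k"
      using x by (simp add: p_def dist_norm upper_half_def)
    have "y $ k \<le> dist y p"
      using abs_component_le_dist_frontier_upper_half[OF p, of y] by simp
    moreover have "dist y p \<le> dist x y + x $ k"
      using dist_triangle[of y p x] xp by (simp add: dist_commute)
    ultimately have "1 + hyp_quotient k x y \<le> (1 + dist x y / sqrt (dist x p * dist y p))\<^sup>2"
      using x le unfolding hyp_quotient_def upper_half_def xp
      by (intro one_plus_div_sqrt_le_square) auto
    also have "\<dots> \<le> (1 + cassinian_sup (upper_half k) x y)\<^sup>2"
      using cassinian_quotient_le_cassinian_sup_upper_half[OF x y p] by (intro power_mono) simp_all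
    finally show ?thesis .
  qed
  show ?thesis
  proof (cases "x $ k \<le> y $ k")
    case True
    with foot assms show ?thesis by blast
  next
    case False
    with foot[of y x] assms show ?thesis
      by (simp add: hyp_quotient_commute cassinian_sup_commute)
  qed
qed

lemma cassinian_sup_upper_half_le_sqrt:
  assumes x: "x \<in> upper_half k" and y: "y \<in> upper_half k"
  shows "cassinian_sup (upper_half k) x y \<le> sqrt (2 * dist x y / min (x $ k) (y $ k))"
  unfolding cassinian_sup_def
proof (rule cSUP_least)
  show "frontier (upper_half k) \<noteq> {}"
    using zero_in_frontier_upper_half by blast
next
  fix p assume p: "p \<in> frontier (upper_half k)"
  define m where "m = min (x $ k) (y $ k)"
  have m: "0 < m"
    using x y by (simp add: m_def upper_half_def)
  have mx: "m \<le> dist x p" and my: "m \<le> dist y p"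
    using abs_component_le_dist_frontier_upper_half[OF p, of x]
      abs_component_le_dist_frontier_upper_half[OF p, of y] by (auto simp: m_def)
  have prod: "m * (dist x y / 2) \<le> dist x p * dist y p"
  proof (cases "dist x y / 2 \<le> dist y p")
    case True
    then show ?thesis
      using mx m by (intro mult_mono) auto
  next
    case False
    then have "dist x y / 2 \<le> dist x p"
      using dist_triangle2[of x y p] by linarith
    then show ?thesis
      using my m mult_mono[of "dist x y / 2" "dist x p" m "dist y p"] by (simp add: mult.commute)
  qed
  have "(dist x y / sqrt (dist x p * dist y p))\<^sup>2 \<le> 2 * dist x y / m"
  proof (cases "dist x y = 0")
    case False
    then have md: "0 < m * (dist x y / 2)"
      using m by simp
    with prod have "0 < dist x p * dist y p"
      by linarith
    have "(dist x y / sqrt (dist x p * dist y p))\<^sup>2 = (dist x y)\<^sup>2 / (dist x p * dist y p)"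
      by (simp add: power_divide)
    also have "\<dots> \<le> (dist x y)\<^sup>2 / (m * (dist x y / 2))"
      using prod md \<open>0 < dist x p * dist y p\<close> by (intro divide_left_mono) simp_all
    also have "\<dots> = 2 * dist x y / m"
      using m False by (simp add: power2_eq_square)
    finally show ?thesis .
  qed simp
  then show "dist x y / sqrt (dist x p * dist y p) \<le> sqrt (2 * dist x y / min (x $ k) (y $ k))"
    unfolding m_def by (rule real_le_rsqrt)
qed


lemma cassinian_si_hyp_dist_bounds:
  assumes "x \<in> upper_half k" "y \<in> upper_half k"
  shows "hyp_dist k x y / 4 \<le> cassinian_si (upper_half k) x y"
    and "cassinian_si (upper_half k) x y \<le> hyp_dist k x y"
    and "cassinian_si (upper_half k) x y \<le> hyp_dist k x y / 2 + ln (5 / 4)"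
proof -
  define u where "u = hyp_quotient k x y"
  define S where "S = cassinian_sup (upper_half k) x y"
  have u: "0 \<le> u" and S: "0 \<le> S"
    using hyp_quotient_nonneg[OF assms] cassinian_sup_upper_half_nonneg[OF assms]
    by (simp_all add: u_def S_def)
  have hyp: "hyp_dist k x y = 2 * arsinh (u / 2)"
    unfolding u_def by (rule hyp_dist_eq_arsinh[OF assms])
  have cas: "cassinian_si (upper_half k) x y = ln (1 + S)"
    unfolding S_def by (rule cassinian_si_eq_ln_cassinian_sup)
  have "ln (1 + S) \<le> ln (1 + u)"
    using S cassinian_sup_upper_half_le_hyp_quotient[OF assms] by (simp add: S_def u_def)
  moreover have "ln (1 + u) \<le> 2 * ln (1 + S)"
  proof -
    have "ln (1 + u) \<le> ln ((1 + S)\<^sup>2)"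
      using u one_plus_hyp_quotient_le_square_cassinian_sup[OF assms]
      by (intro ln_mono) (simp_all add: S_def u_def)
    also have "\<dots> = 2 * ln (1 + S)"
      using S by (simp add: ln_realpow)
    finally show ?thesis .
  qed
  ultimately show "hyp_dist k x y / 4 \<le> cassinian_si (upper_half k) x y"
    and "cassinian_si (upper_half k) x y \<le> hyp_dist k x y"
    and "cassinian_si (upper_half k) x y \<le> hyp_dist k x y / 2 + ln (5 / 4)"
    using arsinh_half_le_ln_one_plus[OF u] ln_one_plus_le_two_arsinh_half[OF u]
      ln_one_plus_le_arsinh_half_add[OF u]
    unfolding hyp cas by linarith+
qed

lemma cassinian_si_div_hyp_dist_bounds:
  assumes "x \<in> upper_half k" "y \<in> upper_half k" "x \<noteq> y"
  shows "1 / 4 \<le> cassinian_si (upper_half k) x y / hyp_dist k x y"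
    and "cassinian_si (upper_half k) x y / hyp_dist k x y \<le> 1"
  using cassinian_si_hyp_dist_bounds(1,2)[OF assms(1,2)] hyp_dist_pos[OF assms]
  by (simp_all add: le_divide_eq divide_le_eq)

section \<open>Sharpness\<close>

lemma INF_eq_tendsto_upper_bounds:
  fixes f :: "'a \<Rightarrow> 'b :: {conditionally_complete_linorder, linorder_topology}"
  assumes lower: "\<And>a. a \<in> A \<Longrightarrow> L \<le> f a"
    and lim: "(g \<longlongrightarrow> L) F" and F: "F \<noteq> bot"
    and approx: "\<forall>\<^sub>F s in F. \<exists>a\<in>A. f a \<le> g s"
  shows "(INF a\<in>A. f a) = L"
proof (rule cInf_eq_non_empty)
  show "f ` A \<noteq> {}"
    using eventually_happens[OF approx] F by blast
  show "L \<le> z" if "z \<in> f ` A" for z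
    using lower that by blast
  fix l assume lb: "\<And>z. z \<in> f ` A \<Longrightarrow> l \<le> z"
  from approx have "\<forall>\<^sub>F s in F. l \<le> g s"
    by (rule eventually_mono) (use lb order.trans in blast)
  then show "l \<le> L"
    using tendsto_lowerbound[OF lim] F by blast
qed

lemma SUP_eq_tendsto_lower_bounds:
  fixes f :: "'a \<Rightarrow> 'b :: {conditionally_complete_linorder, linorder_topology}"
  assumes upper: "\<And>a. a \<in> A \<Longrightarrow> f a \<le> L"
    and lim: "(g \<longlongrightarrow> L) F" and F: "F \<noteq> bot"
    and approx: "\<forall>\<^sub>F s in F. \<exists>a\<in>A. g s \<le> f a"
  shows "(SUP a\<in>A. f a) = L"
proof (rule cSup_eq_non_empty)
  show "f ` A \<noteq> {}"
    using eventually_happens[OF approx] F by blast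
  show "z \<le> L" if "z \<in> f ` A" for z
    using upper that by blast
  fix l assume ub: "\<And>z. z \<in> f ` A \<Longrightarrow> z \<le> l"
  from approx have "\<forall>\<^sub>F s in F. g s \<le> l"
    by (rule eventually_mono) (use ub order.trans in blast)
  then show "L \<le> l"
    using tendsto_upperbound[OF lim] F by blast
qed

lemma cassinian_si_hyp_dist_axis:
  assumes "0 < a" "0 < b"
  defines "u \<equiv> \<bar>a - b\<bar> / sqrt (a * b)"
  shows "cassinian_si (upper_half k) (axis k a) (axis k b) = ln (1 + u)"
    and "hyp_dist k (axis k a) (axis k b) = 2 * arsinh (u / 2)"
proof -
  have mem: "axis k a \<in> upper_half k" "axis k b \<in> upper_half k"
    using assms by (simp_all add: upper_half_def)
  have "hyp_quotient k (axis k a) (axis k b) = u"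
    by (simp add: hyp_quotient_def dist_axis_axis u_def)
  then show "cassinian_si (upper_half k) (axis k a) (axis k b) = ln (1 + u)"
    and "hyp_dist k (axis k a) (axis k b) = 2 * arsinh (u / 2)"
    using cassinian_sup_upper_half_axis[OF assms(1,2), of k] hyp_dist_eq_arsinh[OF mem]
    by (simp_all add: cassinian_si_eq_ln_cassinian_sup)
qed

lemma cassinian_si_div_hyp_dist_horizontal:
  assumes "j \<noteq> k" "0 < s"
  defines "x \<equiv> axis k 1" and "y \<equiv> axis k 1 + axis j s"
  shows "cassinian_si (upper_half k) x y / hyp_dist k x y \<le> ln (1 + sqrt (2 * s)) / (2 * arsinh (s / 2))"
proof -
  have xk: "x $ k = 1" and yk: "y $ k = 1"
    using assms(1) by (simp_all add: x_def y_def axis_def)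
  have mem: "x \<in> upper_half k" "y \<in> upper_half k"
    using xk yk by (simp_all add: upper_half_def)
  have dist: "dist x y = s"
    using assms(2) by (simp add: x_def y_def dist_norm norm_axis_real)
  have hyp: "hyp_dist k x y = 2 * arsinh (s / 2)"
    using hyp_dist_eq_arsinh[OF mem] by (simp add: hyp_quotient_def dist xk yk)
  have "cassinian_sup (upper_half k) x y \<le> sqrt (2 * s)"
    using cassinian_sup_upper_half_le_sqrt[OF mem] by (simp add: dist xk yk)
  then have "cassinian_si (upper_half k) x y \<le> ln (1 + sqrt (2 * s))"
    using cassinian_sup_upper_half_nonneg[OF mem]
    by (simp add: cassinian_si_eq_ln_cassinian_sup)
  moreover have "0 \<le> cassinian_si (upper_half k) x y"
    using cassinian_sup_upper_half_nonneg[OF mem] by (simp add: cassinian_si_eq_ln_cassinian_sup)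
  moreover have "0 < arsinh (s / 2)"
    using assms(2) by simp
  ultimately show ?thesis
    unfolding hyp by (intro frac_le) auto
qed


lemma INF_cassinian_si_div_hyp_dist_upper_half:
  fixes k :: "'n::finite"
  assumes "CARD('n) \<ge> 2"
  shows "(INF (x, y)\<in>{(x, y). x \<in> upper_half k \<and> y \<in> upper_half k \<and> x \<noteq> y}.
           cassinian_si (upper_half k) x y / hyp_dist k x y) = 1 / 4"
proof -
  have "\<not> UNIV \<subseteq> {k}"
  proof
    assume "UNIV \<subseteq> {k}"
    then have "CARD('n) \<le> card {k}"
      by (intro card_mono) auto
    with assms show False
      by simp
  qed
  then obtain j :: 'n where j: "j \<noteq> k"
    by blast
  define P where "P = {(x, y). x \<in> upper_half k \<and> y \<in> upper_half k \<and> (x :: real^'n) \<noteq> y}"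
  define ratio where "ratio = (\<lambda>(x, y). cassinian_si (upper_half k) x y / hyp_dist k x y)"
  define g where "g s = ln (1 + sqrt (2 * s)) / (2 * arsinh (s / 2))" for s :: real
  have "\<forall>\<^sub>F s in at_top. \<exists>xy\<in>P. ratio xy \<le> g s"
    using eventually_gt_at_top[of 0]
  proof (rule eventually_mono)
    fix s :: real
    assume s: "0 < s"
    have "axis k 1 \<in> upper_half k" "axis k 1 + axis j s \<in> upper_half k"
      using j by (simp_all add: upper_half_def axis_def)
    moreover have "axis k 1 \<noteq> axis k 1 + axis j s"
      using s by (simp add: axis_eq_0_iff)
    ultimately show "\<exists>xy\<in>P. ratio xy \<le> g s"
      using cassinian_si_div_hyp_dist_horizontal[OF j s]
      by (intro bexI[of _ "(axis k 1, axis k 1 + axis j s)"]) (simp_all add: P_def ratio_def g_def)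
  qed
  moreover have "(g \<longlongrightarrow> 1 / 4) at_top"
    unfolding g_def by real_asymp
  ultimately have "(INF xy\<in>P. ratio xy) = 1 / 4"
    using cassinian_si_div_hyp_dist_bounds(1) by (intro INF_eq_tendsto_upper_bounds) (auto simp: P_def ratio_def)
  then show ?thesis
    by (simp add: P_def ratio_def)
qed

lemma SUP_cassinian_si_div_hyp_dist_upper_half:
  fixes k :: "'n::finite"
  shows "(SUP (x, y)\<in>{(x, y). x \<in> upper_half k \<and> y \<in> upper_half k \<and> x \<noteq> y}.
      cassinian_si (upper_half k) x y / hyp_dist k x y) = 1"
proof -
  define P where "P = {(x, y). x \<in> upper_half k \<and> y \<in> upper_half k \<and> (x :: real^'n) \<noteq> y}"
  define ratio where "ratio = (\<lambda>(x, y). cassinian_si (upper_half k) x y / hyp_dist k x y)"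
  define g where "g t = ln (1 + (t - 1) / sqrt t) / (2 * arsinh ((t - 1) / sqrt t / 2))" for t :: real
  have "\<forall>\<^sub>F t in at_right 1. \<exists>xy\<in>P. g t \<le> ratio xy"
    using eventually_at_right_less[of 1]
  proof (rule eventually_mono)
    fix t :: real
    assume t: "1 < t"
    then have "axis k 1 \<in> upper_half k" "axis k t \<in> upper_half k" "axis k 1 \<noteq> axis k t"
      by (simp_all add: upper_half_def axis_eq_axis)
    moreover have "ratio (axis k 1, axis k t) = g t"
      using cassinian_si_hyp_dist_axis[of 1 t k] t by (simp add: ratio_def g_def)
    ultimately show "\<exists>xy\<in>P. g t \<le> ratio xy"
      by (intro bexI[of _ "(axis k 1, axis k t)"]) (simp_all add: P_def)
  qed
  moreover have "(g \<longlongrightarrow> 1) (at_right 1)"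
    unfolding g_def by real_asymp
  ultimately have "(SUP xy\<in>P. ratio xy) = 1"
    using cassinian_si_div_hyp_dist_bounds(2) by (intro SUP_eq_tendsto_lower_bounds) (auto simp: P_def ratio_def)
  then show ?thesis
    by (simp add: P_def ratio_def)
qed

lemma cassinian_si_eq_hyp_dist_half_add:
  "cassinian_si (upper_half k) (axis k 2) (axis k (1 / 2))
     = hyp_dist k (axis k 2) (axis k (1 / 2)) / 2 + ln (5 / 4)"
proof -
  have "ln (5 / 2 :: real) = ln 2 + ln (5 / 4)"
    using ln_mult[of 2 "5 / 4 :: real"] by simp
  then show ?thesis
    using cassinian_si_hyp_dist_axis[of 2 "1 / 2" k] by (simp add: arsinh_three_quarters)
qed

theorem theorem4p2:
  fixes k :: "'n::finite"
  assumes "CARD('n) \<ge> 2"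
  shows "(\<forall>x\<in>upper_half k. \<forall>y\<in>upper_half k.
            hyp_dist k x y / 4 \<le> cassinian_si (upper_half k) x y
          \<and> cassinian_si (upper_half k) x y \<le> hyp_dist k x y
          \<and> cassinian_si (upper_half k) x y \<le> hyp_dist k x y / 2 + ln (5/4))
       \<and> (INF (x, y)\<in>{(x, y). x \<in> upper_half k \<and> y \<in> upper_half k \<and> x \<noteq> y}.
            cassinian_si (upper_half k) x y / hyp_dist k x y) = 1/4
       \<and> (SUP (x, y)\<in>{(x, y). x \<in> upper_half k \<and> y \<in> upper_half k \<and> x \<noteq> y}.
            cassinian_si (upper_half k) x y / hyp_dist k x y) = 1
       \<and> cassinian_si (upper_half k) (axis k 2) (axis k (1/2))
           = hyp_dist k (axis k 2) (axis k (1/2)) / 2 + ln (5/4)"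
  using cassinian_si_hyp_dist_bounds INF_cassinian_si_div_hyp_dist_upper_half[OF assms]
    SUP_cassinian_si_div_hyp_dist_upper_half cassinian_si_eq_hyp_dist_half_add
  by auto

end
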